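(* For each $l \in H^*$, the map $\Phi_l = \tau_l \circ \phi^*: R(G/H,1) \to R(G,H)$ is an injective homomorphism of bialgebras (respecting the induction products and restriction coproducts) which sends (classes of) irreducible representations to irreducible representations.
   Context: Let $G$ be a finite abelian group (written additively) and $H \subseteq G$ a subgroup. For $n \ge 1$, $S_n[G] = S_n \ltimes G^n$ is the group of $n \times n$ monomial matrices whose nonzero entries lie in $G$. Let $s: S_n[G] \to G$ be the homomorphism sending a monomial matrix to the sum of its nonzero entries, and let $G_n(G,H) = \{g \in S_n[G] : s(g) \in H\}$. For $n \ge 1$, $R_n(G,H)$ is the Grothendieck group of finite-dimensional complex representations of $G_n(G,H)$, $R_0(G,H) = \mathbb{Z}$, and $R(G,H) = \bigoplus_{n \ge 0} R_n(G,H)$, with graded bilinear form $\langle \cdot,\cdot\rangle$ for which the irreducible classes (and $1 \in R_0$) form an orthonormal basis. Using the block-diagonal embedding $G_k(G,H) \times G_m(G,H) \subseteq G_{k+m}(G,H)$, the product on $R(G,H)$ is induction and the coproduct is restriction. The same construction applied to the pair $(G/H, 1)$ gives $R(G/H,1)$ (here $G_n(G/H,1)$ is the group of monomial matrices with entries in $G/H$ whose entries sum to $0$). A "bialgebra homomorphism" means a map respecting product, unit, coproduct and counit. Let $\phi: G_n(G,H) \to G_n(G/H,1)$ be reduction of the matrix entries mod $H$; it is surjective with kernel the diagonal subgroup $H^n$, and $\phi^*: R(G/H,1) \to R(G,H)$ is the graded map induced by pullback of representations along $\phi$. $H^* = \mathrm{Hom}(H, \mathbb{C}^\times)$; for $l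 \in H^*$, $\tau_l$ is the graded operator on $R(G,H)$ induced by tensoring with the linear character $g \mapsto l(s(g))$ of $G_n(G,H)$ (whose restriction to $H^n$ is $l^{\otimes n}$). *)

theory Defs
  imports "Jordan_Normal_Form.Matrix" "HOL-Algebra.Coset" "HOL-Algebra.FiniteProduct"
          "HOL-Combinatorics.Permutations"
begin

text \<open>An n x n monomial matrix with entries in the group A is encoded as a pair (sigma, f):
  sigma is a permutation of {0..<n}, f i is the entry in column i, sitting in row sigma i;
  f is normalised to the unit of A outside {0..<n}. Matrix multiplication of monomial
  matrices gives the product below.\<close>

definition entry_sum :: "('a,'b) monoid_scheme \<Rightarrow> nat \<Rightarrow> (nat \<Rightarrow> nat) \<times> (nat \<Rightarrow> 'a) \<Rightarrow> 'a" where
  "entry_sum A n g = finprod A (snd g) {..<n}"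

definition mono_grp :: "('a,'b) monoid_scheme \<Rightarrow> 'a set \<Rightarrow> nat \<Rightarrow> ((nat \<Rightarrow> nat) \<times> (nat \<Rightarrow> 'a)) monoid" where
  "mono_grp A K n =
    \<lparr> carrier = {(\<sigma>, f). \<sigma> permutes {..<n} \<and> (\<forall>i<n. f i \<in> carrier A)
                        \<and> (\<forall>i. n \<le> i \<longrightarrow> f i = \<one>\<^bsub>A\<^esub>) \<and> entry_sum A n (\<sigma>, f) \<in> K},
      mult = (\<lambda>(\<sigma>, f) (\<tau>, g). (\<sigma> \<circ> \<tau>, \<lambda>j. if j < n then f (\<tau> j) \<otimes>\<^bsub>A\<^esub> g j else \<one>\<^bsub>A\<^esub>)),
      one = (id, \<lambda>_. \<one>\<^bsub>A\<^esub>) \<rparr>"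

text \<open>Block-diagonal embedding G_k x G_m into G_(k+m).\<close>
definition block_emb :: "nat \<Rightarrow> nat \<Rightarrow> ((nat \<Rightarrow> nat) \<times> (nat \<Rightarrow> 'a)) \<times> ((nat \<Rightarrow> nat) \<times> (nat \<Rightarrow> 'a))
                          \<Rightarrow> (nat \<Rightarrow> nat) \<times> (nat \<Rightarrow> 'a)" where
  "block_emb k m = (\<lambda>((\<sigma>, f), (\<tau>, g)).
     (\<lambda>i. if i < k then \<sigma> i else if i < k + m then k + \<tau> (i - k) else i,
      \<lambda>i. if i < k then f i else g (i - k)))"

text \<open>Reduction of the entries modulo H: G_n(G,H) -> G_n(G/H,1).\<close>
definition reduce :: "('a,'b) monoid_scheme \<Rightarrow> 'a set \<Rightarrow> nat \<Rightarrow> (nat \<Rightarrow> nat) \<times> (nat \<Rightarrow> 'a)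
                        \<Rightarrow> (nat \<Rightarrow> nat) \<times> (nat \<Rightarrow> 'a set)" where
  "reduce G H n g = (fst g, \<lambda>i. if i < n then H #>\<^bsub>G\<^esub> snd g i else H)"

definition is_rep :: "('e,'z) monoid_scheme \<Rightarrow> nat \<Rightarrow> ('e \<Rightarrow> complex mat) \<Rightarrow> bool" where
  "is_rep \<Gamma> d \<rho> \<longleftrightarrow> (\<forall>g\<in>carrier \<Gamma>. \<rho> g \<in> carrier_mat d d)
      \<and> (\<forall>g\<in>carrier \<Gamma>. \<forall>h\<in>carrier \<Gamma>. \<rho> (g \<otimes>\<^bsub>\<Gamma>\<^esub> h) = \<rho> g * \<rho> h)
      \<and> \<rho> \<one>\<^bsub>\<Gamma>\<^esub> = 1\<^sub>m d"

definition mat_tr :: "complex mat \<Rightarrow> complex" where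
  "mat_tr A = (\<Sum>i<dim_row A. A $$ (i, i))"

definition char_of :: "('e,'z) monoid_scheme \<Rightarrow> ('e \<Rightarrow> complex mat) \<Rightarrow> 'e \<Rightarrow> complex" where
  "char_of \<Gamma> \<rho> = (\<lambda>g. if g \<in> carrier \<Gamma> then mat_tr (\<rho> g) else 0)"

definition is_char :: "('e,'z) monoid_scheme \<Rightarrow> ('e \<Rightarrow> complex) \<Rightarrow> bool" where
  "is_char \<Gamma> \<chi> \<longleftrightarrow> (\<exists>d \<rho>. is_rep \<Gamma> d \<rho> \<and> \<chi> = char_of \<Gamma> \<rho>)"

definition inv_subspace :: "('e,'z) monoid_scheme \<Rightarrow> nat \<Rightarrow> ('e \<Rightarrow> complex mat) \<Rightarrow> complex vec set \<Rightarrow> bool" where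
  "inv_subspace \<Gamma> d \<rho> W \<longleftrightarrow> W \<subseteq> carrier_vec d \<and> 0\<^sub>v d \<in> W
      \<and> (\<forall>v\<in>W. \<forall>w\<in>W. v + w \<in> W) \<and> (\<forall>c. \<forall>v\<in>W. c \<cdot>\<^sub>v v \<in> W)
      \<and> (\<forall>g\<in>carrier \<Gamma>. \<forall>v\<in>W. \<rho> g *\<^sub>v v \<in> W)"

definition irred_rep :: "('e,'z) monoid_scheme \<Rightarrow> nat \<Rightarrow> ('e \<Rightarrow> complex mat) \<Rightarrow> bool" where
  "irred_rep \<Gamma> d \<rho> \<longleftrightarrow> is_rep \<Gamma> d \<rho> \<and> 0 < d
      \<and> (\<forall>W. inv_subspace \<Gamma> d \<rho> W \<longrightarrow> W = {0\<^sub>v d} \<or> W = carrier_vec d)"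

definition irr_char :: "('e,'z) monoid_scheme \<Rightarrow> ('e \<Rightarrow> complex) \<Rightarrow> bool" where
  "irr_char \<Gamma> \<chi> \<longleftrightarrow> (\<exists>d \<rho>. irred_rep \<Gamma> d \<rho> \<and> \<chi> = char_of \<Gamma> \<rho>)"

text \<open>The Grothendieck group, realised (via the character map) as the group of virtual characters.\<close>
definition virt_chars :: "('e,'z) monoid_scheme \<Rightarrow> ('e \<Rightarrow> complex) set" where
  "virt_chars \<Gamma> = {\<chi>. \<exists>\<chi>1 \<chi>2. is_char \<Gamma> \<chi>1 \<and> is_char \<Gamma> \<chi>2 \<and> \<chi> = (\<lambda>g. \<chi>1 g - \<chi>2 g)}"

text \<open>Induction along an injective homomorphism iota: K -> Gamma, and restriction.\<close>
definition ind :: "('k,'y) monoid_scheme \<Rightarrow> ('e,'z) monoid_scheme \<Rightarrow> ('k \<Rightarrow> 'e) \<Rightarrow> ('k \<Rightarrow> complex) \<Rightarrow> 'e \<Rightarrow> complex" where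
  "ind K \<Gamma> \<iota> f = (\<lambda>g. if g \<in> carrier \<Gamma> then
       (\<Sum>x\<in>carrier \<Gamma>. \<Sum>y\<in>carrier K. if \<iota> y = x \<otimes>\<^bsub>\<Gamma>\<^esub> g \<otimes>\<^bsub>\<Gamma>\<^esub> inv\<^bsub>\<Gamma>\<^esub> x then f y else 0)
         / of_nat (card (carrier K))
     else 0)"

definition res :: "('k,'y) monoid_scheme \<Rightarrow> ('k \<Rightarrow> 'e) \<Rightarrow> ('e \<Rightarrow> complex) \<Rightarrow> 'k \<Rightarrow> complex" where
  "res K \<iota> F = (\<lambda>y. if y \<in> carrier K then F (\<iota> y) else 0)"

definition Rn :: "('a,'b) monoid_scheme \<Rightarrow> 'a set \<Rightarrow> nat \<Rightarrow> ((nat \<Rightarrow> nat) \<times> (nat \<Rightarrow> 'a) \<Rightarrow> complex) set" where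
  "Rn A K n = virt_chars (mono_grp A K n)"

text \<open>Product R_k x R_m -> R_(k+m): induction of the external tensor product.\<close>
definition prodR :: "('a,'b) monoid_scheme \<Rightarrow> 'a set \<Rightarrow> nat \<Rightarrow> nat
     \<Rightarrow> ((nat \<Rightarrow> nat) \<times> (nat \<Rightarrow> 'a) \<Rightarrow> complex) \<Rightarrow> ((nat \<Rightarrow> nat) \<times> (nat \<Rightarrow> 'a) \<Rightarrow> complex)
     \<Rightarrow> (nat \<Rightarrow> nat) \<times> (nat \<Rightarrow> 'a) \<Rightarrow> complex" where
  "prodR A K k m x y = ind (mono_grp A K k \<times>\<times> mono_grp A K m) (mono_grp A K (k + m)) (block_emb k m)
                          (\<lambda>(a, b). x a * y b)"

text \<open>(k,m)-component of the coproduct R_(k+m) -> R_k (x) R_m = R(G_k x G_m): restriction.\<close>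
definition coprodR :: "('a,'b) monoid_scheme \<Rightarrow> 'a set \<Rightarrow> nat \<Rightarrow> nat
     \<Rightarrow> ((nat \<Rightarrow> nat) \<times> (nat \<Rightarrow> 'a) \<Rightarrow> complex)
     \<Rightarrow> ((nat \<Rightarrow> nat) \<times> (nat \<Rightarrow> 'a)) \<times> ((nat \<Rightarrow> nat) \<times> (nat \<Rightarrow> 'a)) \<Rightarrow> complex" where
  "coprodR A K k m x = res (mono_grp A K k \<times>\<times> mono_grp A K m) (block_emb k m) x"

text \<open>Unit 1 in R_0 (trivial character of the trivial group G_0) and counit (degree-0 value).\<close>
definition unitR :: "('a,'b) monoid_scheme \<Rightarrow> 'a set \<Rightarrow> (nat \<Rightarrow> nat) \<times> (nat \<Rightarrow> 'a) \<Rightarrow> complex" where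
  "unitR A K = (\<lambda>g. if g \<in> carrier (mono_grp A K 0) then 1 else 0)"

definition dual_char :: "('a,'b) monoid_scheme \<Rightarrow> 'a set \<Rightarrow> ('a \<Rightarrow> complex) \<Rightarrow> bool" where
  "dual_char G H l \<longleftrightarrow> (\<forall>a\<in>H. l a \<noteq> 0) \<and> (\<forall>a\<in>H. \<forall>b\<in>H. l (a \<otimes>\<^bsub>G\<^esub> b) = l a * l b)"

definition Phi :: "('a,'b) monoid_scheme \<Rightarrow> 'a set \<Rightarrow> ('a \<Rightarrow> complex) \<Rightarrow> nat
     \<Rightarrow> ((nat \<Rightarrow> nat) \<times> (nat \<Rightarrow> 'a set) \<Rightarrow> complex) \<Rightarrow> (nat \<Rightarrow> nat) \<times> (nat \<Rightarrow> 'a) \<Rightarrow> complex" where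
  "Phi G H l n x = (\<lambda>g. if g \<in> carrier (mono_grp G H n)
       then l (entry_sum G n g) * x (reduce G H n g) else 0)"

text \<open>Phi_l (x) Phi_l on R_k (x) R_m = R(G_k x G_m).\<close>
definition Phi_tensor :: "('a,'b) monoid_scheme \<Rightarrow> 'a set \<Rightarrow> ('a \<Rightarrow> complex) \<Rightarrow> nat \<Rightarrow> nat
     \<Rightarrow> (((nat \<Rightarrow> nat) \<times> (nat \<Rightarrow> 'a set)) \<times> ((nat \<Rightarrow> nat) \<times> (nat \<Rightarrow> 'a set)) \<Rightarrow> complex)
     \<Rightarrow> ((nat \<Rightarrow> nat) \<times> (nat \<Rightarrow> 'a)) \<times> ((nat \<Rightarrow> nat) \<times> (nat \<Rightarrow> 'a)) \<Rightarrow> complex" where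
  "Phi_tensor G H l k m F = (\<lambda>(g1, g2).
     if g1 \<in> carrier (mono_grp G H k) \<and> g2 \<in> carrier (mono_grp G H m)
     then l (entry_sum G k g1) * l (entry_sum G m g2) * F (reduce G H k g1, reduce G H m g2)
     else 0)"

end

theory Submission
  imports Defs
begin

text \<open>Write \<open>\<phi>\<close> for reduction mod \<open>H\<close> and \<open>s\<close> for the entry sum. On representations \<open>\<Phi>\<^sub>l\<close> is
  \<open>\<rho> \<mapsto> (g \<mapsto> l (s g) \<cdot> \<rho> (\<phi> g))\<close>: inflation along the surjective homomorphism \<open>\<phi>\<close>, twisted by the
  linear character \<open>l \<circ> s\<close>. So it maps characters to characters and irreducibles to irreducibles
  (as \<open>\<phi>\<close> is onto and \<open>l\<close> never vanishes, a subspace invariant under the twisted inflation is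
  invariant under \<open>\<rho>\<close>), and it is injective. Compatibility with restriction holds because \<open>\<phi>\<close> and
  \<open>s\<close> respect the block embedding. For induction, \<open>x g x\<inverse>\<close> lies in the block subgroup iff its
  reduction does, so each summand of the induction formula upstairs is \<open>l (s g)\<close> times the
  corresponding summand downstairs at \<open>\<phi> x\<close>; every fibre of \<open>\<phi>\<close> on \<open>G\<^sub>n(G,H)\<close> has \<open>|H|\<^sup>n\<close> elements,
  and the resulting factor \<open>|H|\<^sup>k\<^sup>+\<^sup>m\<close> cancels against \<open>|G\<^sub>k \<times> G\<^sub>m| = |H|\<^sup>k\<^sup>+\<^sup>m |G'\<^sub>k \<times> G'\<^sub>m|\<close>.\<close>

lemma finprod_hom:
  assumes "comm_group G" "comm_group G'" "h \<in> hom G G'" "f \<in> A \<rightarrow> carrier G"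
  shows "h (finprod G f A) = finprod G' (h \<circ> f) A"
proof -
  interpret G: comm_group G by (rule assms(1))
  interpret G': comm_group G' by (rule assms(2))
  have h_one: "h \<one>\<^bsub>G\<^esub> = \<one>\<^bsub>G'\<^esub>"
    using assms(3) by (simp add: hom_one G.is_group G'.is_group)
  show ?thesis
    using assms(4)
  proof (induction A rule: infinite_finite_induct)
    case (insert a A)
    have f: "f a \<in> carrier G" "f \<in> A \<rightarrow> carrier G"
      using insert.prems by auto
    have hf: "(\<lambda>x. h (f x)) \<in> insert a A \<rightarrow> carrier G'"
      using insert.prems assms(3) by (auto simp: hom_def)
    have "h (finprod G f (insert a A)) = h (f a \<otimes>\<^bsub>G\<^esub> finprod G f A)"
      using insert.hyps f by simp
    also have "\<dots> = h (f a) \<otimes>\<^bsub>G'\<^esub> h (finprod G f A)"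
      using assms(3) f by (simp add: hom_mult)
    also have "\<dots> = finprod G' (h \<circ> f) (insert a A)"
      using insert hf f by (simp add: o_def Pi_iff)
    finally show ?case .
  qed (simp_all add: h_one)
qed

lemma bij_betw_extend_default:
  fixes n :: nat
  shows "bij_betw (\<lambda>\<phi> i. if i < n then \<phi> i else d) (PiE {..<n} B)
     {f. (\<forall>i<n. f i \<in> B i) \<and> (\<forall>i. n \<le> i \<longrightarrow> f i = d)}"
proof (rule bij_betw_byWitness[where f' = "\<lambda>f. restrict f {..<n}"])
  show "\<forall>\<phi>\<in>PiE {..<n} B. restrict (\<lambda>i. if i < n then \<phi> i else d) {..<n} = \<phi>"
  proof
    fix \<phi> assume "\<phi> \<in> PiE {..<n} B"
    then have "restrict \<phi> {..<n} = \<phi>"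
      by (rule PiE_restrict)
    moreover have "restrict (\<lambda>i. if i < n then \<phi> i else d) {..<n} = restrict \<phi> {..<n}"
      by (rule restrict_ext) simp
    ultimately show "restrict (\<lambda>i. if i < n then \<phi> i else d) {..<n} = \<phi>"
      by simp
  qed
  show "\<forall>f\<in>{f. (\<forall>i<n. f i \<in> B i) \<and> (\<forall>i. n \<le> i \<longrightarrow> f i = d)}.
      (\<lambda>i. if i < n then restrict f {..<n} i else d) = f"
    by (simp add: fun_eq_iff not_less)
  show "(\<lambda>\<phi> i. if i < n then \<phi> i else d) ` PiE {..<n} B
      \<subseteq> {f. (\<forall>i<n. f i \<in> B i) \<and> (\<forall>i. n \<le> i \<longrightarrow> f i = d)}"
    by (clarsimp simp: PiE_iff)
  show "(\<lambda>f. restrict f {..<n}) ` {f. (\<forall>i<n. f i \<in> B i) \<and> (\<forall>i. n \<le> i \<longrightarrow> f i = d)}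
      \<subseteq> PiE {..<n} B"
    by clarsimp
qed

lemma card_funs_with_default:
  fixes n :: nat
  shows "card {f. (\<forall>i<n. f i \<in> B i) \<and> (\<forall>i. n \<le> i \<longrightarrow> f i = d)} = (\<Prod>i<n. card (B i))"
proof -
  have "card {f. (\<forall>i<n. f i \<in> B i) \<and> (\<forall>i. n \<le> i \<longrightarrow> f i = d)} = card (PiE {..<n} B)"
    by (rule bij_betw_same_card[OF bij_betw_extend_default, symmetric])
  also have "\<dots> = (\<Prod>i<n. card (B i))"
    by (rule card_PiE) simp
  finally show ?thesis .
qed

lemma finite_funs_with_default:
  fixes n :: nat
  assumes "\<And>i. i < n \<Longrightarrow> finite (B i)"
  shows "finite {f. (\<forall>i<n. f i \<in> B i) \<and> (\<forall>i. n \<le> i \<longrightarrow> f i = d)}"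
proof -
  have "finite (PiE {..<n} B)"
    using assms by (intro finite_PiE) simp_all
  then show ?thesis
    by (rule bij_betw_finite[OF bij_betw_extend_default, THEN iffD1])
qed

lemma sum_if_inj_eq:
  fixes F :: "'a \<Rightarrow> 'b::comm_monoid_add"
  assumes "finite S" "inj_on \<iota> S" "y\<^sub>0 \<in> S" "\<iota> y\<^sub>0 = c"
  shows "(\<Sum>y\<in>S. if \<iota> y = c then F y else 0) = F y\<^sub>0"
proof -
  have "\<iota> y = c \<longleftrightarrow> y = y\<^sub>0" if "y \<in> S" for y
    using assms(2-4) that inj_on_eq_iff by metis
  then have "(\<Sum>y\<in>S. if \<iota> y = c then F y else 0) = (\<Sum>y\<in>S. if y = y\<^sub>0 then F y else 0)"
    by (intro sum.cong) simp_all
  also have "\<dots> = F y\<^sub>0"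
    using assms(1,3) by (simp add: sum.delta')
  finally show ?thesis .
qed

lemma sum_comp_const_card_fibres:
  assumes "finite A" "finite B" "f ` A \<subseteq> B" "\<And>y. y \<in> B \<Longrightarrow> card {x \<in> A. f x = y} = c"
  shows "(\<Sum>x\<in>A. \<phi> (f x)) = of_nat c * (\<Sum>y\<in>B. \<phi> y :: 'c::comm_semiring_1)"
proof -
  have "(\<Sum>x\<in>A. \<phi> (f x)) = (\<Sum>y\<in>B. \<Sum>x\<in>{x \<in> A. f x = y}. \<phi> (f x))"
    using sum.group[OF assms(1-3), of "\<lambda>x. \<phi> (f x)"] by simp
  also have "\<dots> = (\<Sum>y\<in>B. of_nat c * \<phi> y)"
    using assms(4) by (intro sum.cong) auto
  finally show ?thesis
    by (simp add: sum_distrib_left)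
qed

lemma smult_mat_mult_vec:
  assumes "A \<in> carrier_mat nr nc" "v \<in> carrier_vec nc"
  shows "(k \<cdot>\<^sub>m A) *\<^sub>v v = k \<cdot>\<^sub>v (A *\<^sub>v (v :: 'a :: comm_semiring_0 vec))"
  by (rule eq_vecI) (use assms in \<open>auto simp: scalar_prod_def sum_distrib_left mult.assoc\<close>)

lemma smult_mat_mult_smult_mat:
  assumes "A \<in> carrier_mat nr n" "B \<in> carrier_mat n nc"
  shows "(a \<cdot>\<^sub>m A) * (b \<cdot>\<^sub>m B) = (a * b) \<cdot>\<^sub>m (A * (B :: 'a :: comm_semiring_0 mat))"
  by (rule eq_matI) (use assms in \<open>auto simp: scalar_prod_def sum_distrib_left mult_ac\<close>)

lemma one_smult_mat [simp]: "(1 :: 'a :: semiring_1) \<cdot>\<^sub>m A = A"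
  by (rule eq_matI) simp_all

lemma mat_tr_smult:
  assumes "A \<in> carrier_mat n n"
  shows "mat_tr (k \<cdot>\<^sub>m A) = k * mat_tr A"
  using assms by (simp add: mat_tr_def sum_distrib_left)

lemma dual_char_one:
  assumes "monoid G" "\<one>\<^bsub>G\<^esub> \<in> K" "dual_char G K \<chi>"
  shows "\<chi> \<one>\<^bsub>G\<^esub> = 1"
proof -
  have "\<chi> \<one>\<^bsub>G\<^esub> = \<chi> \<one>\<^bsub>G\<^esub> * \<chi> \<one>\<^bsub>G\<^esub>"
    using assms monoid.l_one[OF assms(1), of "\<one>\<^bsub>G\<^esub>"] monoid.one_closed[OF assms(1)]
    unfolding dual_char_def by metis
  moreover have "\<chi> \<one>\<^bsub>G\<^esub> \<noteq> 0"
    using assms(2,3) by (simp add: dual_char_def)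
  ultimately show ?thesis
    by simp
qed

lemma dual_char_mult:
  assumes "dual_char G K \<chi>" "a \<in> K" "b \<in> K"
  shows "\<chi> (a \<otimes>\<^bsub>G\<^esub> b) = \<chi> a * \<chi> b"
  using assms by (simp add: dual_char_def)

lemma virt_chars_vanish:
  assumes "x \<in> virt_chars \<Gamma>" "g \<notin> carrier \<Gamma>"
  shows "x g = 0"
  using assms by (auto simp: virt_chars_def is_char_def char_of_def)

definition twisted_pullback_rep :: "('e \<Rightarrow> complex) \<Rightarrow> ('e \<Rightarrow> 'f) \<Rightarrow> ('f \<Rightarrow> complex mat) \<Rightarrow> 'e \<Rightarrow> complex mat"
  where "twisted_pullback_rep \<chi> \<phi> \<rho> = (\<lambda>g. \<chi> g \<cdot>\<^sub>m \<rho> (\<phi> g))"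

definition twisted_pullback :: "('e, 'z) monoid_scheme \<Rightarrow> ('e \<Rightarrow> complex) \<Rightarrow> ('e \<Rightarrow> 'f)
    \<Rightarrow> ('f \<Rightarrow> complex) \<Rightarrow> 'e \<Rightarrow> complex"
  where "twisted_pullback \<Gamma> \<chi> \<phi> x = (\<lambda>g. if g \<in> carrier \<Gamma> then \<chi> g * x (\<phi> g) else 0)"

context group_hom
begin

lemma is_rep_twisted_pullback_rep:
  assumes \<chi>: "dual_char G (carrier G) \<chi>" and \<rho>: "is_rep H d \<rho>"
  shows "is_rep G d (twisted_pullback_rep \<chi> h \<rho>)"
  unfolding is_rep_def
proof (intro conjI ballI)
  have \<rho>_mat: "\<rho> (h g) \<in> carrier_mat d d" if "g \<in> carrier G" for g
    using \<rho> that by (simp add: is_rep_def)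
  fix g
  assume g: "g \<in> carrier G"
  then show "twisted_pullback_rep \<chi> h \<rho> g \<in> carrier_mat d d"
    using \<rho>_mat by (simp add: twisted_pullback_rep_def)
  fix g'
  assume g': "g' \<in> carrier G"
  have "twisted_pullback_rep \<chi> h \<rho> (g \<otimes>\<^bsub>G\<^esub> g') = (\<chi> g * \<chi> g') \<cdot>\<^sub>m (\<rho> (h g) * \<rho> (h g'))"
    using g g' \<chi> \<rho> by (simp add: twisted_pullback_rep_def dual_char_def is_rep_def)
  also have "\<dots> = twisted_pullback_rep \<chi> h \<rho> g * twisted_pullback_rep \<chi> h \<rho> g'"
    using smult_mat_mult_smult_mat[OF \<rho>_mat[OF g] \<rho>_mat[OF g']] by (simp add: twisted_pullback_rep_def)
  finally show "twisted_pullback_rep \<chi> h \<rho> (g \<otimes>\<^bsub>G\<^esub> g')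
      = twisted_pullback_rep \<chi> h \<rho> g * twisted_pullback_rep \<chi> h \<rho> g'" .
next
  have "\<chi> \<one>\<^bsub>G\<^esub> = 1"
    using \<chi> by (intro dual_char_one) simp_all
  then show "twisted_pullback_rep \<chi> h \<rho> \<one>\<^bsub>G\<^esub> = 1\<^sub>m d"
    using \<rho> by (simp add: twisted_pullback_rep_def is_rep_def)
qed

lemma char_of_twisted_pullback_rep:
  assumes "is_rep H d \<rho>"
  shows "char_of G (twisted_pullback_rep \<chi> h \<rho>) = twisted_pullback G \<chi> h (char_of H \<rho>)"
proof
  fix g
  show "char_of G (twisted_pullback_rep \<chi> h \<rho>) g = twisted_pullback G \<chi> h (char_of H \<rho>) g"
  proof (cases "g \<in> carrier G")
    case True
    then have "\<rho> (h g) \<in> carrier_mat d d"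
      using assms by (simp add: is_rep_def)
    with True show ?thesis
      by (simp add: char_of_def twisted_pullback_def twisted_pullback_rep_def mat_tr_smult)
  qed (simp add: char_of_def twisted_pullback_def)
qed

lemma is_char_twisted_pullback:
  assumes "dual_char G (carrier G) \<chi>" "is_char H x"
  shows "is_char G (twisted_pullback G \<chi> h x)"
  using assms is_rep_twisted_pullback_rep char_of_twisted_pullback_rep
  unfolding is_char_def by metis

lemma twisted_pullback_virt_chars:
  assumes "dual_char G (carrier G) \<chi>" "x \<in> virt_chars H"
  shows "twisted_pullback G \<chi> h x \<in> virt_chars G"
proof -
  obtain x\<^sub>1 x\<^sub>2 where x: "is_char H x\<^sub>1" "is_char H x\<^sub>2" "x = (\<lambda>g. x\<^sub>1 g - x\<^sub>2 g)"
    using assms(2) by (auto simp: virt_chars_def)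
  have "twisted_pullback G \<chi> h x
      = (\<lambda>g. twisted_pullback G \<chi> h x\<^sub>1 g - twisted_pullback G \<chi> h x\<^sub>2 g)"
    by (simp add: x twisted_pullback_def fun_eq_iff algebra_simps)
  then show ?thesis
    unfolding virt_chars_def
    using is_char_twisted_pullback[OF assms(1) x(1)] is_char_twisted_pullback[OF assms(1) x(2)]
    by blast
qed

lemma inj_on_twisted_pullback:
  assumes "\<forall>g\<in>carrier G. \<chi> g \<noteq> 0" "h ` carrier G = carrier H"
  shows "inj_on (twisted_pullback G \<chi> h) (virt_chars H)"
proof (rule inj_onI)
  fix x y
  assume x: "x \<in> virt_chars H" and y: "y \<in> virt_chars H"
    and eq: "twisted_pullback G \<chi> h x = twisted_pullback G \<chi> h y"
  show "x = y"
  proof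
    fix g'
    show "x g' = y g'"
    proof (cases "g' \<in> carrier H")
      case True
      then obtain g where g: "g \<in> carrier G" "g' = h g"
        using assms(2) by (metis imageE)
      have "\<chi> g * x (h g) = \<chi> g * y (h g)"
        using fun_cong[OF eq, of g] g(1) by (simp add: twisted_pullback_def)
      then show ?thesis
        using assms(1) g by simp
    next
      case False
      then show ?thesis
        using virt_chars_vanish[OF x False] virt_chars_vanish[OF y False] by simp
    qed
  qed
qed

lemma irred_rep_twisted_pullback_rep:
  assumes \<chi>: "dual_char G (carrier G) \<chi>" and surj: "h ` carrier G = carrier H"
    and \<rho>: "irred_rep H d \<rho>"
  shows "irred_rep G d (twisted_pullback_rep \<chi> h \<rho>)"
proof -
  have rep: "is_rep H d \<rho>"
    using \<rho> by (simp add: irred_rep_def)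
  have "inv_subspace H d \<rho> W" if W: "inv_subspace G d (twisted_pullback_rep \<chi> h \<rho>) W" for W
    unfolding inv_subspace_def
  proof (intro conjI ballI)
    fix g' v
    assume g': "g' \<in> carrier H" and v: "v \<in> W"
    obtain g where g: "g \<in> carrier G" "h g = g'"
      using g' surj by (metis imageE)
    have "v \<in> carrier_vec d" "\<rho> g' \<in> carrier_mat d d"
      using v W g' rep by (auto simp: inv_subspace_def is_rep_def)
    then have "twisted_pullback_rep \<chi> h \<rho> g *\<^sub>v v = \<chi> g \<cdot>\<^sub>v (\<rho> g' *\<^sub>v v)"
      using g(2) by (simp add: twisted_pullback_rep_def smult_mat_mult_vec)
    then have "\<rho> g' *\<^sub>v v = (1 / \<chi> g) \<cdot>\<^sub>v (twisted_pullback_rep \<chi> h \<rho> g *\<^sub>v v)"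
      using \<chi> g(1) by (simp add: smult_smult_assoc dual_char_def)
    then show "\<rho> g' *\<^sub>v v \<in> W"
      using W g(1) v by (simp add: inv_subspace_def)
  qed (use W in \<open>simp_all add: inv_subspace_def\<close>)
  then show ?thesis
    using \<rho> is_rep_twisted_pullback_rep[OF \<chi> rep] by (simp add: irred_rep_def)
qed

lemma irr_char_twisted_pullback:
  assumes "dual_char G (carrier G) \<chi>" "h ` carrier G = carrier H" "irr_char H x"
  shows "irr_char G (twisted_pullback G \<chi> h x)"
  using assms irred_rep_twisted_pullback_rep char_of_twisted_pullback_rep
  unfolding irr_char_def irred_rep_def by metis

end

definition pushforward :: "('k, 'y) monoid_scheme \<Rightarrow> ('k \<Rightarrow> 'e) \<Rightarrow> ('k \<Rightarrow> complex) \<Rightarrow> 'e \<Rightarrow> complex"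
  where "pushforward K \<iota> f c = (\<Sum>y\<in>carrier K. if \<iota> y = c then f y else 0)"

lemma ind_pushforward:
  "ind K \<Gamma> \<iota> f g = (if g \<in> carrier \<Gamma>
     then (\<Sum>x\<in>carrier \<Gamma>. pushforward K \<iota> f (x \<otimes>\<^bsub>\<Gamma>\<^esub> g \<otimes>\<^bsub>\<Gamma>\<^esub> inv\<^bsub>\<Gamma>\<^esub> x)) / of_nat (card (carrier K))
     else 0)"
  by (simp add: ind_def pushforward_def)

lemma block_perm_permutes:
  fixes k m :: nat
  assumes "\<sigma> permutes {..<k}" "\<tau> permutes {..<m}"
  shows "(\<lambda>i. if i < k then \<sigma> i else if i < k + m then k + \<tau> (i - k) else i) permutes {..<k + m}"
proof -
  have shift: "bij_betw ((+) k) {..<m} {k..<k + m}"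
    by (rule bij_betw_byWitness[where f' = "\<lambda>i. i - k"]) auto
  define \<tau>' where "\<tau>' = (\<lambda>i. if i \<in> {k..<k + m} then k + \<tau> (inv_into {..<m} ((+) k) i) else i)"
  have "\<tau>' permutes {k..<k + m}"
    unfolding \<tau>'_def using permutes_bij_inv_into[OF assms(2) shift] by simp
  then have \<tau>': "\<tau>' permutes {..<k + m}"
    by (rule permutes_subset) auto
  have \<sigma>: "\<sigma> permutes {..<k + m}"
    using assms(1) by (rule permutes_subset) auto
  have inv_shift: "inv_into {..<m} ((+) k) i = i - k" if "i \<in> {k..<k + m}" for i
    using that by (intro inv_into_f_eq) auto
  have "(\<lambda>i. if i < k then \<sigma> i else if i < k + m then k + \<tau> (i - k) else i) = \<sigma> \<circ> \<tau>'"
  proof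
    fix i
    show "(if i < k then \<sigma> i else if i < k + m then k + \<tau> (i - k) else i) = (\<sigma> \<circ> \<tau>') i"
      using permutes_not_in[OF assms(1), of i] permutes_not_in[OF assms(1), of "k + \<tau> (i - k)"]
      by (auto simp: \<tau>'_def inv_shift)
  qed
  then show ?thesis
    using permutes_compose[OF \<tau>' \<sigma>] by simp
qed

definition block_proj :: "nat \<Rightarrow> nat \<Rightarrow> 'a \<Rightarrow> (nat \<Rightarrow> nat) \<times> (nat \<Rightarrow> 'a)
    \<Rightarrow> ((nat \<Rightarrow> nat) \<times> (nat \<Rightarrow> 'a)) \<times> ((nat \<Rightarrow> nat) \<times> (nat \<Rightarrow> 'a))" where
  "block_proj k m e = (\<lambda>(p, F).
     ((\<lambda>i. if i < k then p i else i, \<lambda>i. if i < k then F i else e),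
      (\<lambda>i. if i < m then p (k + i) - k else i, \<lambda>i. if i < m then F (k + i) else e)))"

lemma block_proj_block_emb:
  assumes "\<sigma> permutes {..<k}" "\<tau> permutes {..<m}" "\<forall>i. k \<le> i \<longrightarrow> f i = e" "\<forall>i. m \<le> i \<longrightarrow> g i = e"
  shows "block_proj k m e (block_emb k m ((\<sigma>, f), (\<tau>, g))) = ((\<sigma>, f), (\<tau>, g))"
proof -
  have "\<sigma> i = i" if "\<not> i < k" for i
    using permutes_not_in[OF assms(1)] that by simp
  moreover have "\<tau> i = i" if "\<not> i < m" for i
    using permutes_not_in[OF assms(2)] that by simp
  ultimately show ?thesis
    using assms(3,4) by (auto simp: block_proj_def block_emb_def fun_eq_iff not_less)
qed

lemma block_emb_block_proj:
  assumes "fst c = fst (block_emb k m ((\<sigma>, f), (\<tau>, g)))" "\<sigma> permutes {..<k}" "\<tau> permutes {..<m}"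
    and "\<forall>i. k + m \<le> i \<longrightarrow> snd c i = e"
  shows "block_emb k m (block_proj k m e c) = c"
proof -
  obtain p F where c: "c = (p, F)"
    by (cases c)
  have p: "p = (\<lambda>i. if i < k then \<sigma> i else if i < k + m then k + \<tau> (i - k) else i)"
    using assms(1) by (simp add: c block_emb_def)
  show ?thesis
    using assms(4) by (auto simp: c p block_proj_def block_emb_def fun_eq_iff)
qed

locale monomial_group = comm_group A for A :: "('c, 'd) monoid_scheme" (structure) +
  fixes K assumes K_subgroup: "subgroup K A"
begin

lemma mono_grp_carrier_iff:
  "(\<sigma>, f) \<in> carrier (mono_grp A K n) \<longleftrightarrow> \<sigma> permutes {..<n} \<and> (\<forall>i<n. f i \<in> carrier A)
     \<and> (\<forall>i. n \<le> i \<longrightarrow> f i = \<one>) \<and> entry_sum A n (\<sigma>, f) \<in> K"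
  by (simp add: mono_grp_def)

lemma mono_grp_mult:
  "(\<sigma>, f) \<otimes>\<^bsub>mono_grp A K n\<^esub> (\<tau>, g) = (\<sigma> \<circ> \<tau>, \<lambda>j. if j < n then f (\<tau> j) \<otimes> g j else \<one>)"
  by (simp add: mono_grp_def)

lemma mono_grp_one: "\<one>\<^bsub>mono_grp A K n\<^esub> = (id, \<lambda>_. \<one>)"
  by (simp add: mono_grp_def)

lemma entry_sum_closed: "\<forall>i<n. f i \<in> carrier A \<Longrightarrow> entry_sum A n (\<sigma>, f) \<in> carrier A"
  by (auto simp: entry_sum_def intro!: finprod_closed)

lemma entry_sum_one: "entry_sum A n (id, \<lambda>_. \<one>) = \<one>"
  by (simp add: entry_sum_def)

lemma entry_sum_mult:
  assumes "\<tau> permutes {..<n}" "\<forall>i<n. f i \<in> carrier A" "\<forall>i<n. g i \<in> carrier A"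
  shows "entry_sum A n (\<sigma> \<circ> \<tau>, \<lambda>j. if j < n then f (\<tau> j) \<otimes> g j else \<one>)
       = entry_sum A n (\<sigma>, f) \<otimes> entry_sum A n (\<tau>, g)"
proof -
  have \<tau>: "\<tau> ` {..<n} = {..<n}" "inj_on \<tau> {..<n}"
    using assms(1) by (simp_all add: permutes_image permutes_inj_on)
  have f: "f \<in> {..<n} \<rightarrow> carrier A" "(\<lambda>j. f (\<tau> j)) \<in> {..<n} \<rightarrow> carrier A" "g \<in> {..<n} \<rightarrow> carrier A"
    using assms \<tau>(1) by auto
  have "finprod A (\<lambda>j. if j < n then f (\<tau> j) \<otimes> g j else \<one>) {..<n}
      = finprod A (\<lambda>j. f (\<tau> j) \<otimes> g j) {..<n}"
    using f by (intro finprod_cong') auto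
  also have "\<dots> = finprod A (\<lambda>j. f (\<tau> j)) {..<n} \<otimes> finprod A g {..<n}"
    using f by (simp add: finprod_multf)
  also have "finprod A (\<lambda>j. f (\<tau> j)) {..<n} = finprod A f {..<n}"
    using finprod_reindex[of f \<tau> "{..<n}"] \<tau> f(1) by simp
  finally show ?thesis
    by (simp add: entry_sum_def)
qed

lemma mono_grp_mult_closed:
  assumes "x \<in> carrier (mono_grp A K n)" "y \<in> carrier (mono_grp A K n)"
  shows "x \<otimes>\<^bsub>mono_grp A K n\<^esub> y \<in> carrier (mono_grp A K n)"
proof -
  obtain \<sigma> f \<tau> g where x: "x = (\<sigma>, f)" and y: "y = (\<tau>, g)"
    by (cases x, cases y)
  have \<sigma>: "\<sigma> permutes {..<n}" "\<forall>i<n. f i \<in> carrier A" "entry_sum A n (\<sigma>, f) \<in> K"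
   and \<tau>: "\<tau> permutes {..<n}" "\<forall>i<n. g i \<in> carrier A" "entry_sum A n (\<tau>, g) \<in> K"
    using assms x y by (auto simp: mono_grp_carrier_iff)
  have "\<forall>i<n. f (\<tau> i) \<otimes> g i \<in> carrier A"
    using \<sigma>(2) \<tau>(2) permutes_in_image[OF \<tau>(1)] by auto
  moreover have "entry_sum A n (\<sigma> \<circ> \<tau>, \<lambda>j. if j < n then f (\<tau> j) \<otimes> g j else \<one>) \<in> K"
    using entry_sum_mult[OF \<tau>(1) \<sigma>(2) \<tau>(2)] \<sigma>(3) \<tau>(3) K_subgroup by (simp add: subgroup.m_closed)
  ultimately show ?thesis
    using \<sigma>(1) \<tau>(1) by (simp add: x y mono_grp_mult mono_grp_carrier_iff permutes_compose)
qed

lemma mono_grp_left_inverse: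
  assumes x: "x \<in> carrier (mono_grp A K n)"
  shows "\<exists>y\<in>carrier (mono_grp A K n). y \<otimes>\<^bsub>mono_grp A K n\<^esub> x = \<one>\<^bsub>mono_grp A K n\<^esub>"
proof -
  obtain \<sigma> f where x_eq: "x = (\<sigma>, f)"
    by (cases x)
  have \<sigma>: "\<sigma> permutes {..<n}" "\<forall>i<n. f i \<in> carrier A" "entry_sum A n (\<sigma>, f) \<in> K"
    using x x_eq by (auto simp: mono_grp_carrier_iff)
  define \<sigma>' where "\<sigma>' = Hilbert_Choice.inv \<sigma>"
  define f' where "f' = (\<lambda>i. if i < n then inv (f (\<sigma>' i)) else \<one>)"
  have \<sigma>': "\<sigma>' permutes {..<n}" "\<sigma>' \<circ> \<sigma> = id" "\<And>i. \<sigma>' (\<sigma> i) = i"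
    using \<sigma>(1) by (simp_all add: \<sigma>'_def permutes_inv permutes_inv_o permutes_inverses)
  have f': "\<forall>i<n. f' i \<in> carrier A"
    using \<sigma>(2) permutes_in_image[OF \<sigma>'(1)] by (simp add: f'_def)
  have prod: "(\<sigma>', f') \<otimes>\<^bsub>mono_grp A K n\<^esub> x = (id, \<lambda>_. \<one>)"
    using \<sigma>(2) \<sigma>' permutes_in_image[OF \<sigma>(1)]
    by (auto simp: x_eq mono_grp_mult f'_def fun_eq_iff)
  have "entry_sum A n (\<sigma>', f') \<otimes> entry_sum A n (\<sigma>, f) = \<one>"
    using entry_sum_mult[OF \<sigma>(1) f' \<sigma>(2), of \<sigma>'] prod by (simp add: x_eq mono_grp_mult entry_sum_one)
  then have "entry_sum A n (\<sigma>', f') = inv (entry_sum A n (\<sigma>, f))"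
    using entry_sum_closed[OF f'] entry_sum_closed[OF \<sigma>(2)] by (metis inv_equality)
  then have "(\<sigma>', f') \<in> carrier (mono_grp A K n)"
    using \<sigma>'(1) f' \<sigma>(3) K_subgroup by (simp add: mono_grp_carrier_iff f'_def subgroup.m_inv_closed)
  then show ?thesis
    using prod by (auto simp: mono_grp_one)
qed

lemma group_mono_grp: "group (mono_grp A K n)"
proof (rule groupI)
  show "\<one>\<^bsub>mono_grp A K n\<^esub> \<in> carrier (mono_grp A K n)"
    using K_subgroup by (simp add: mono_grp_one mono_grp_carrier_iff entry_sum_one subgroup.one_closed)
next
  fix x y z
  assume xyz: "x \<in> carrier (mono_grp A K n)" "y \<in> carrier (mono_grp A K n)"
    "z \<in> carrier (mono_grp A K n)"
  obtain \<sigma> f \<tau> g \<upsilon> h where x: "x = (\<sigma>, f)" and y: "y = (\<tau>, g)" and z: "z = (\<upsilon>, h)"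
    by (cases x, cases y, cases z)
  have fgh: "\<forall>i<n. f i \<in> carrier A" "\<forall>i<n. g i \<in> carrier A" "\<forall>i<n. h i \<in> carrier A"
    and \<tau>\<upsilon>: "\<tau> permutes {..<n}" "\<upsilon> permutes {..<n}"
    using xyz x y z by (auto simp: mono_grp_carrier_iff)
  have "\<forall>i<n. \<tau> i < n" "\<forall>i<n. \<upsilon> i < n"
    using permutes_in_image[OF \<tau>\<upsilon>(1)] permutes_in_image[OF \<tau>\<upsilon>(2)] by auto
  with fgh show "x \<otimes>\<^bsub>mono_grp A K n\<^esub> y \<otimes>\<^bsub>mono_grp A K n\<^esub> z
      = x \<otimes>\<^bsub>mono_grp A K n\<^esub> (y \<otimes>\<^bsub>mono_grp A K n\<^esub> z)"
    by (auto simp: x y z mono_grp_mult o_assoc m_assoc)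
next
  fix x
  assume "x \<in> carrier (mono_grp A K n)"
  then show "\<one>\<^bsub>mono_grp A K n\<^esub> \<otimes>\<^bsub>mono_grp A K n\<^esub> x = x"
    by (cases x) (auto simp: mono_grp_one mono_grp_mult mono_grp_carrier_iff)
qed (simp_all add: mono_grp_mult_closed mono_grp_left_inverse)

lemma entry_sum_in_K: "x \<in> carrier (mono_grp A K n) \<Longrightarrow> entry_sum A n x \<in> K"
  by (cases x) (simp add: mono_grp_carrier_iff)

lemma entry_sum_hom: "entry_sum A n \<in> hom (mono_grp A K n) A"
proof (rule homI)
  fix x
  assume "x \<in> carrier (mono_grp A K n)"
  then show "entry_sum A n x \<in> carrier A"
    by (cases x) (simp add: mono_grp_carrier_iff entry_sum_closed)
next
  fix x y
  assume xy: "x \<in> carrier (mono_grp A K n)" "y \<in> carrier (mono_grp A K n)"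
  obtain \<sigma> f \<tau> g where "x = (\<sigma>, f)" "y = (\<tau>, g)"
    by (cases x, cases y)
  with xy show "entry_sum A n (x \<otimes>\<^bsub>mono_grp A K n\<^esub> y) = entry_sum A n x \<otimes> entry_sum A n y"
    using entry_sum_mult[of \<tau> n f g \<sigma>] by (simp add: mono_grp_mult mono_grp_carrier_iff)
qed

lemma group_hom_entry_sum: "group_hom (mono_grp A K n) A (entry_sum A n)"
  by (intro group_hom.intro group_hom_axioms.intro group_mono_grp is_group entry_sum_hom)

lemma entry_sum_conj:
  assumes "x \<in> carrier (mono_grp A K n)" "g \<in> carrier (mono_grp A K n)"
  shows "entry_sum A n (x \<otimes>\<^bsub>mono_grp A K n\<^esub> g \<otimes>\<^bsub>mono_grp A K n\<^esub> inv\<^bsub>mono_grp A K n\<^esub> x)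
       = entry_sum A n g"
proof -
  interpret s: group_hom "mono_grp A K n" A "entry_sum A n"
    by (rule group_hom_entry_sum)
  have sx: "entry_sum A n x \<in> carrier A" and sg: "entry_sum A n g \<in> carrier A"
    using assms by simp_all
  have "entry_sum A n (x \<otimes>\<^bsub>mono_grp A K n\<^esub> g \<otimes>\<^bsub>mono_grp A K n\<^esub> inv\<^bsub>mono_grp A K n\<^esub> x)
      = entry_sum A n x \<otimes> entry_sum A n g \<otimes> inv (entry_sum A n x)"
    using assms by simp
  also have "\<dots> = entry_sum A n g"
    using sx sg by (simp add: m_comm[OF sx sg] m_assoc)
  finally show ?thesis .
qed

lemma dual_char_entry_sum:
  assumes "dual_char A K l"
  shows "dual_char (mono_grp A K n) (carrier (mono_grp A K n)) (\<lambda>g. l (entry_sum A n g))"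
  unfolding dual_char_def
proof (intro conjI ballI)
  fix a
  assume "a \<in> carrier (mono_grp A K n)"
  then show "l (entry_sum A n a) \<noteq> 0"
    using assms entry_sum_in_K by (simp add: dual_char_def)
  fix b
  assume "b \<in> carrier (mono_grp A K n)"
  with \<open>a \<in> carrier (mono_grp A K n)\<close>
  show "l (entry_sum A n (a \<otimes>\<^bsub>mono_grp A K n\<^esub> b)) = l (entry_sum A n a) * l (entry_sum A n b)"
    using assms entry_sum_in_K by (simp add: dual_char_def hom_mult[OF entry_sum_hom])
qed

lemma finite_carrier_mono_grp:
  assumes "finite (carrier A)"
  shows "finite (carrier (mono_grp A K n))"
proof (rule finite_subset)
  show "carrier (mono_grp A K n) \<subseteq> {\<sigma>. \<sigma> permutes {..<n}}
      \<times> {f. (\<forall>i<n. f i \<in> carrier A) \<and> (\<forall>i. n \<le> i \<longrightarrow> f i = \<one>)}"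
    by (auto simp: mono_grp_def)
  show "finite ({\<sigma>. \<sigma> permutes {..<n}} \<times> {f. (\<forall>i<n. f i \<in> carrier A) \<and> (\<forall>i. n \<le> i \<longrightarrow> f i = \<one>)})"
    using finite_permutations[of "{..<n}"] finite_funs_with_default[of n "\<lambda>_. carrier A"] assms
    by simp
qed

lemma entry_sum_block_emb:
  assumes "\<forall>i<k. f i \<in> carrier A" "\<forall>i<m. g i \<in> carrier A"
  shows "entry_sum A (k + m) (block_emb k m ((\<sigma>, f), (\<tau>, g)))
       = entry_sum A k (\<sigma>, f) \<otimes> entry_sum A m (\<tau>, g)"
proof -
  define h where "h = (\<lambda>i. if i < k then f i else g (i - k))"
  have shift: "{k..<k + m} = (\<lambda>i. i + k) ` {..<m}"
    by (simp add: lessThan_atLeast0 add.commute)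
  have h: "h \<in> {..<k} \<rightarrow> carrier A" "h \<in> {k..<k + m} \<rightarrow> carrier A"
    using assms by (auto simp: h_def)
  have "{..<k + m} = {..<k} \<union> {k..<k + m}"
    by auto
  then have "finprod A h {..<k + m} = finprod A h {..<k} \<otimes> finprod A h {k..<k + m}"
    using h by (simp add: finprod_Un_disjoint ivl_disj_int)
  also have "finprod A h {..<k} = finprod A f {..<k}"
    using assms by (intro finprod_cong') (auto simp: h_def)
  also have "finprod A h {k..<k + m} = finprod A (\<lambda>i. h (i + k)) {..<m}"
    using h(2) unfolding shift by (intro finprod_reindex) (auto simp: inj_on_def)
  also have "\<dots> = finprod A g {..<m}"
    using assms by (intro finprod_cong') (auto simp: h_def)
  finally show ?thesis
    by (simp add: entry_sum_def block_emb_def h_def)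
qed

lemma block_emb_closed:
  assumes "y\<^sub>1 \<in> carrier (mono_grp A K k)" "y\<^sub>2 \<in> carrier (mono_grp A K m)"
  shows "block_emb k m (y\<^sub>1, y\<^sub>2) \<in> carrier (mono_grp A K (k + m))"
proof -
  obtain \<sigma> f \<tau> g where y: "y\<^sub>1 = (\<sigma>, f)" "y\<^sub>2 = (\<tau>, g)"
    by (cases y\<^sub>1, cases y\<^sub>2)
  have \<sigma>: "\<sigma> permutes {..<k}" "\<forall>i<k. f i \<in> carrier A" "\<forall>i. k \<le> i \<longrightarrow> f i = \<one>"
      "entry_sum A k (\<sigma>, f) \<in> K"
    and \<tau>: "\<tau> permutes {..<m}" "\<forall>i<m. g i \<in> carrier A" "\<forall>i. m \<le> i \<longrightarrow> g i = \<one>"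
      "entry_sum A m (\<tau>, g) \<in> K"
    using assms y by (auto simp: mono_grp_carrier_iff)
  have "entry_sum A (k + m) (block_emb k m ((\<sigma>, f), (\<tau>, g))) \<in> K"
    using entry_sum_block_emb[OF \<sigma>(2) \<tau>(2)] \<sigma>(4) \<tau>(4) K_subgroup by (simp add: subgroup.m_closed)
  then show ?thesis
    using \<sigma> \<tau> block_perm_permutes[OF \<sigma>(1) \<tau>(1)]
    by (auto simp: y block_emb_def mono_grp_carrier_iff)
qed

lemma inj_on_block_emb: "inj_on (block_emb k m) (carrier (mono_grp A K k) \<times> carrier (mono_grp A K m))"
  by (rule inj_on_inverseI[where g = "block_proj k m \<one>"])
     (auto simp: mono_grp_carrier_iff block_proj_block_emb)

lemma entry_sum_block_emb_closed:
  assumes "y\<^sub>1 \<in> carrier (mono_grp A K k)" "y\<^sub>2 \<in> carrier (mono_grp A K m)"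
  shows "entry_sum A (k + m) (block_emb k m (y\<^sub>1, y\<^sub>2)) = entry_sum A k y\<^sub>1 \<otimes> entry_sum A m y\<^sub>2"
  using assms entry_sum_block_emb by (cases y\<^sub>1, cases y\<^sub>2) (simp add: mono_grp_carrier_iff)

end

locale reduction = comm_group G for G :: "'a monoid" (structure) +
  fixes H assumes H_subgroup: "subgroup H G" and finite_G: "finite (carrier G)"
begin

lemma comm_group_Mod: "comm_group (G Mod H)"
  by (rule abelian_FactGroup[OF H_subgroup])

lemma subgroup_one_Mod: "subgroup {H} (G Mod H)"
  using group.triv_subgroup[OF comm_group.axioms(2)[OF comm_group_Mod]] by simp

sublocale mono: monomial_group G H
  by (intro monomial_group.intro comm_group_axioms monomial_group_axioms.intro H_subgroup)

sublocale mono_quot: monomial_group "G Mod H" "{H}"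
  by (intro monomial_group.intro comm_group_Mod monomial_group_axioms.intro subgroup_one_Mod)

abbreviation \<Gamma> :: "nat \<Rightarrow> ((nat \<Rightarrow> nat) \<times> (nat \<Rightarrow> 'a)) monoid"
  where "\<Gamma> n \<equiv> mono_grp G H n"

abbreviation \<Gamma>' :: "nat \<Rightarrow> ((nat \<Rightarrow> nat) \<times> (nat \<Rightarrow> 'a set)) monoid"
  where "\<Gamma>' n \<equiv> mono_grp (G Mod H) {H} n"

abbreviation red :: "nat \<Rightarrow> (nat \<Rightarrow> nat) \<times> (nat \<Rightarrow> 'a) \<Rightarrow> (nat \<Rightarrow> nat) \<times> (nat \<Rightarrow> 'a set)"
  where "red n \<equiv> reduce G H n"

lemma rcos_closed_Mod: "x \<in> carrier G \<Longrightarrow> H #> x \<in> carrier (G Mod H)"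
  by (simp add: carrier_FactGroup)

lemma rcos_eq_self_iff: "x \<in> carrier G \<Longrightarrow> H #> x = H \<longleftrightarrow> x \<in> H"
  using subgroup.rcos_const[OF H_subgroup is_group] rcos_self[OF _ H_subgroup] by metis

lemma reduce_pair: "red n (\<sigma>, f) = (\<sigma>, \<lambda>i. if i < n then H #> f i else H)"
  unfolding reduce_def fst_conv snd_conv ..

lemma entry_sum_reduce:
  assumes "\<forall>i<n. f i \<in> carrier G"
  shows "entry_sum (G Mod H) n (red n (\<sigma>, f)) = H #> entry_sum G n (\<sigma>, f)"
proof -
  have "finprod (G Mod H) (\<lambda>i. if i < n then H #> f i else H) {..<n}
      = finprod (G Mod H) ((#>) H \<circ> f) {..<n}"
    using assms rcos_closed_Mod by (intro mono_quot.finprod_cong') auto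
  also have "\<dots> = H #> finprod G f {..<n}"
    using assms by (intro finprod_hom[symmetric] comm_group_axioms comm_group_Mod
        normal.r_coset_hom_Mod subgroup_imp_normal H_subgroup) auto
  finally show ?thesis
    by (simp add: entry_sum_def reduce_pair)
qed

lemma mem_mono_grp_iff_reduce:
  "x \<in> carrier (\<Gamma> n) \<longleftrightarrow>
     red n x \<in> carrier (\<Gamma>' n) \<and> (\<forall>i<n. snd x i \<in> carrier G) \<and> (\<forall>i. n \<le> i \<longrightarrow> snd x i = \<one>)"
proof -
  obtain \<sigma> f where x: "x = (\<sigma>, f)"
    by (cases x)
  have "entry_sum G n (\<sigma>, f) \<in> H \<longleftrightarrow> entry_sum (G Mod H) n (red n (\<sigma>, f)) \<in> {H}"
    if "\<forall>i<n. f i \<in> carrier G"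
    using that entry_sum_reduce rcos_eq_self_iff mono.entry_sum_closed by simp
  then show ?thesis
    using rcos_closed_Mod
    by (auto simp: x reduce_pair mono.mono_grp_carrier_iff mono_quot.mono_grp_carrier_iff simp del: insert_iff)
qed

lemma reduce_closed: "x \<in> carrier (\<Gamma> n) \<Longrightarrow> red n x \<in> carrier (\<Gamma>' n)"
  by (simp add: mem_mono_grp_iff_reduce)

lemma reduce_mult:
  assumes "x \<in> carrier (\<Gamma> n)" "y \<in> carrier (\<Gamma> n)"
  shows "red n (x \<otimes>\<^bsub>\<Gamma> n\<^esub> y) = red n x \<otimes>\<^bsub>\<Gamma>' n\<^esub> red n y"
proof -
  obtain \<sigma> f \<tau> g where x: "x = (\<sigma>, f)" and y: "y = (\<tau>, g)"
    by (cases x, cases y)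
  have fg: "\<forall>i<n. f i \<in> carrier G" "\<forall>i<n. g i \<in> carrier G" and \<tau>: "\<tau> permutes {..<n}"
    using assms x y by (auto simp: mono.mono_grp_carrier_iff)
  have "\<forall>i<n. \<tau> i < n"
    using permutes_in_image[OF \<tau>] by simp
  then show ?thesis
    using fg by (auto simp: x y mono.mono_grp_mult mono_quot.mono_grp_mult reduce_pair fun_eq_iff
        normal.rcos_sum[OF subgroup_imp_normal[OF H_subgroup]])
qed

lemma group_hom_reduce: "group_hom (\<Gamma> n) (\<Gamma>' n) (red n)"
  by (intro group_hom.intro group_hom_axioms.intro mono.group_mono_grp mono_quot.group_mono_grp homI
      reduce_closed reduce_mult)

lemma fibre_reduce:
  assumes "(\<sigma>, F) \<in> carrier (\<Gamma>' n)"
  shows "{x \<in> carrier (\<Gamma> n). red n x = (\<sigma>, F)}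
       = Pair \<sigma> ` {f. (\<forall>i<n. f i \<in> F i) \<and> (\<forall>i. n \<le> i \<longrightarrow> f i = \<one>)}"
proof -
  have F: "\<forall>i<n. F i \<in> carrier (G Mod H)" "\<forall>i. n \<le> i \<longrightarrow> F i = H"
    using assms by (auto simp: mono_quot.mono_grp_carrier_iff)
  have coset_iff: "H #> a = F i \<longleftrightarrow> a \<in> F i" if "i < n" "a \<in> carrier G" for i a
  proof -
    obtain b where b: "b \<in> carrier G" "F i = H #> b"
      using F(1) \<open>i < n\<close> by (auto simp: carrier_FactGroup)
    show ?thesis
      using b that(2) repr_independence[OF _ b(1) H_subgroup] repr_independenceD[OF H_subgroup that(2)]
      by metis
  qed
  have F_carrier: "F i \<subseteq> carrier G" if "i < n" for i
    using F(1) that subgroup.rcosets_carrier[OF H_subgroup is_group] by (simp add: FactGroup_def)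
  show ?thesis
  proof (intro equalityI subsetI)
    fix x
    assume "x \<in> {x \<in> carrier (\<Gamma> n). red n x = (\<sigma>, F)}"
    moreover obtain \<sigma>' f where x: "x = (\<sigma>', f)"
      by (cases x)
    ultimately have f: "\<forall>i<n. f i \<in> carrier G" "\<forall>i. n \<le> i \<longrightarrow> f i = \<one>"
      and red_x: "\<sigma>' = \<sigma>" "(\<lambda>i. if i < n then H #> f i else H) = F"
      by (simp_all add: mono.mono_grp_carrier_iff reduce_pair)
    have "f i \<in> F i" if "i < n" for i
      using fun_cong[OF red_x(2), of i] coset_iff[OF that] f(1) that by simp
    then show "x \<in> Pair \<sigma> ` {f. (\<forall>i<n. f i \<in> F i) \<and> (\<forall>i. n \<le> i \<longrightarrow> f i = \<one>)}"
      using f(2) by (simp add: x red_x(1))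
  next
    fix x
    assume "x \<in> Pair \<sigma> ` {f. (\<forall>i<n. f i \<in> F i) \<and> (\<forall>i. n \<le> i \<longrightarrow> f i = \<one>)}"
    then obtain f where x: "x = (\<sigma>, f)" and f: "\<forall>i<n. f i \<in> F i" "\<forall>i. n \<le> i \<longrightarrow> f i = \<one>"
      by blast
    have f_carrier: "\<forall>i<n. f i \<in> carrier G"
      using f(1) F_carrier by blast
    have "red n x = (\<sigma>, F)"
      using f(1) f_carrier F(2) coset_iff by (auto simp: x reduce_pair fun_eq_iff)
    then show "x \<in> {x \<in> carrier (\<Gamma> n). red n x = (\<sigma>, F)}"
      using assms f(2) f_carrier by (simp add: mem_mono_grp_iff_reduce x)
  qed
qed

lemma card_fibre_reduce:
  assumes "y \<in> carrier (\<Gamma>' n)"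
  shows "card {x \<in> carrier (\<Gamma> n). red n x = y} = card H ^ n"
proof -
  obtain \<sigma> F where y: "y = (\<sigma>, F)"
    by (cases y)
  have "F i \<in> carrier (G Mod H)" if "i < n" for i
    using assms that by (simp add: y mono_quot.mono_grp_carrier_iff)
  then have F: "F i \<in> rcosets H" if "i < n" for i
    using that by (simp add: FactGroup_def)
  have "card {x \<in> carrier (\<Gamma> n). red n x = y}
      = card {f. (\<forall>i<n. f i \<in> F i) \<and> (\<forall>i. n \<le> i \<longrightarrow> f i = \<one>)}"
    using fibre_reduce[OF assms[unfolded y]] by (simp add: y card_image inj_on_def)
  also have "\<dots> = (\<Prod>i<n. card (F i))"
    by (rule card_funs_with_default)
  also have "\<dots> = (\<Prod>i<n. card H)"
    using F card_rcosets_equal[OF _ subgroup.subset[OF H_subgroup], symmetric]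
    by (intro prod.cong) simp_all
  also have "\<dots> = card H ^ n"
    by simp
  finally show ?thesis .
qed

lemma finite_H: "finite H"
  using finite_G subgroup.subset[OF H_subgroup] by (rule finite_subset[rotated])

lemma card_H_pos: "0 < card H"
  using finite_H subgroup.one_closed[OF H_subgroup] card_gt_0_iff by blast

lemma reduce_surj: "red n ` carrier (\<Gamma> n) = carrier (\<Gamma>' n)"
proof (intro equalityI subsetI)
  fix y
  assume "y \<in> carrier (\<Gamma>' n)"
  then have "card {x \<in> carrier (\<Gamma> n). red n x = y} \<noteq> 0"
    using card_fibre_reduce card_H_pos by simp
  then obtain x where "x \<in> carrier (\<Gamma> n)" "red n x = y"
    by (metis (mono_tags, lifting) card.empty empty_Collect_eq)
  then show "y \<in> red n ` carrier (\<Gamma> n)"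
    by (metis imageI)
qed (auto intro: reduce_closed)

lemma finite_carrier_\<Gamma>: "finite (carrier (\<Gamma> n))"
  by (rule mono.finite_carrier_mono_grp[OF finite_G])

lemma finite_carrier_\<Gamma>': "finite (carrier (\<Gamma>' n))"
  unfolding reduce_surj[symmetric] by (rule finite_imageI[OF finite_carrier_\<Gamma>])

lemma sum_reduce:
  fixes \<phi> :: "(nat \<Rightarrow> nat) \<times> (nat \<Rightarrow> 'a set) \<Rightarrow> 'c :: comm_semiring_1"
  shows "(\<Sum>x\<in>carrier (\<Gamma> n). \<phi> (red n x)) = of_nat (card H ^ n) * (\<Sum>y\<in>carrier (\<Gamma>' n). \<phi> y)"
  by (rule sum_comp_const_card_fibres[OF finite_carrier_\<Gamma> finite_carrier_\<Gamma>'
        image_subsetI[OF reduce_closed] card_fibre_reduce])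

lemma card_carrier_\<Gamma>: "card (carrier (\<Gamma> n)) = card H ^ n * card (carrier (\<Gamma>' n))"
  using sum_reduce[where \<phi> = "\<lambda>_. 1 :: nat"] by simp

lemma reduce_block_emb:
  "red (k + m) (block_emb k m (y\<^sub>1, y\<^sub>2)) = block_emb k m (red k y\<^sub>1, red m y\<^sub>2)"
  by (cases y\<^sub>1, cases y\<^sub>2) (auto simp: reduce_pair block_emb_def fun_eq_iff)

lemma reduce_block_proj:
  "map_prod (red k) (red m) (block_proj k m \<one> c) = block_proj k m H (red (k + m) c)"
  by (cases c) (simp add: reduce_pair block_proj_def fun_eq_iff)

lemma block_emb_lift:
  assumes c: "c \<in> carrier (\<Gamma> (k + m))"
    and y: "(\<sigma>\<^sub>1, F\<^sub>1) \<in> carrier (\<Gamma>' k)" "(\<sigma>\<^sub>2, F\<^sub>2) \<in> carrier (\<Gamma>' m)"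
    and red_c: "red (k + m) c = block_emb k m ((\<sigma>\<^sub>1, F\<^sub>1), (\<sigma>\<^sub>2, F\<^sub>2))"
  shows "c \<in> block_emb k m ` (carrier (\<Gamma> k) \<times> carrier (\<Gamma> m))"
proof -
  have \<sigma>: "\<sigma>\<^sub>1 permutes {..<k}" "\<sigma>\<^sub>2 permutes {..<m}"
    and F: "\<forall>i. k \<le> i \<longrightarrow> F\<^sub>1 i = H" "\<forall>i. m \<le> i \<longrightarrow> F\<^sub>2 i = H"
    using y by (auto simp: mono_quot.mono_grp_carrier_iff)
  obtain p F where c_eq: "c = (p, F)"
    by (cases c)
  define c\<^sub>1 where "c\<^sub>1 = fst (block_proj k m \<one> c)"
  define c\<^sub>2 where "c\<^sub>2 = snd (block_proj k m \<one> c)"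
  have "map_prod (red k) (red m) (block_proj k m \<one> c) = ((\<sigma>\<^sub>1, F\<^sub>1), (\<sigma>\<^sub>2, F\<^sub>2))"
    using block_proj_block_emb[OF \<sigma> F] by (simp add: reduce_block_proj red_c)
  then have red_c12: "red k c\<^sub>1 = (\<sigma>\<^sub>1, F\<^sub>1)" "red m c\<^sub>2 = (\<sigma>\<^sub>2, F\<^sub>2)"
    by (simp_all add: c\<^sub>1_def c\<^sub>2_def map_prod_def split_beta)
  have F_entries: "\<forall>i<k + m. F i \<in> carrier G" "\<forall>i. k + m \<le> i \<longrightarrow> F i = \<one>"
    using c by (simp_all add: mem_mono_grp_iff_reduce c_eq)
  have "snd c\<^sub>1 = (\<lambda>i. if i < k then F i else \<one>)" "snd c\<^sub>2 = (\<lambda>i. if i < m then F (k + i) else \<one>)"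
    by (simp_all add: c\<^sub>1_def c\<^sub>2_def c_eq block_proj_def)
  then have "c\<^sub>1 \<in> carrier (\<Gamma> k)" "c\<^sub>2 \<in> carrier (\<Gamma> m)"
    using red_c12 y F_entries(1) by (simp_all add: mem_mono_grp_iff_reduce)
  moreover have "block_emb k m (c\<^sub>1, c\<^sub>2) = c"
  proof -
    have "fst c = fst (block_emb k m ((\<sigma>\<^sub>1, F\<^sub>1), (\<sigma>\<^sub>2, F\<^sub>2)))"
      using arg_cong[OF red_c, of fst] by (simp add: c_eq reduce_pair)
    moreover have "\<forall>i. k + m \<le> i \<longrightarrow> snd c i = \<one>"
      using F_entries(2) by (simp add: c_eq)
    ultimately show ?thesis
      using block_emb_block_proj[OF _ \<sigma>] by (simp add: c\<^sub>1_def c\<^sub>2_def)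
  qed
  ultimately show ?thesis
    by blast
qed

lemma block_emb_image_iff_reduce:
  assumes "c \<in> carrier (\<Gamma> (k + m))"
  shows "c \<in> block_emb k m ` (carrier (\<Gamma> k) \<times> carrier (\<Gamma> m))
     \<longleftrightarrow> red (k + m) c \<in> block_emb k m ` (carrier (\<Gamma>' k) \<times> carrier (\<Gamma>' m))"
  using block_emb_lift[OF assms] by (auto simp: reduce_block_emb intro: reduce_closed)

lemma Phi_eq_twisted_pullback:
  "Phi G H l n = twisted_pullback (\<Gamma> n) (\<lambda>g. l (entry_sum G n g)) (red n)"
  by (simp add: fun_eq_iff Phi_def twisted_pullback_def)

lemma Phi_Rn:
  assumes "dual_char G H l" "x \<in> Rn (G Mod H) {H} n"
  shows "Phi G H l n x \<in> Rn G H n"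
  using group_hom.twisted_pullback_virt_chars[OF group_hom_reduce mono.dual_char_entry_sum] assms
  by (simp add: Rn_def Phi_eq_twisted_pullback)

lemma inj_on_Phi:
  assumes "dual_char G H l"
  shows "inj_on (Phi G H l n) (Rn (G Mod H) {H} n)"
  using group_hom.inj_on_twisted_pullback[OF group_hom_reduce _ reduce_surj]
    mono.dual_char_entry_sum[OF assms]
  by (simp add: Rn_def Phi_eq_twisted_pullback dual_char_def)

lemma irr_char_Phi:
  assumes "dual_char G H l" "irr_char (\<Gamma>' n) \<chi>"
  shows "irr_char (\<Gamma> n) (Phi G H l n \<chi>)"
  using group_hom.irr_char_twisted_pullback[OF group_hom_reduce mono.dual_char_entry_sum reduce_surj]
    assms
  by (simp add: Phi_eq_twisted_pullback)

lemma pushforward_block_emb_Phi: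
  assumes l: "dual_char G H l" and c: "c \<in> carrier (\<Gamma> (k + m))"
  shows "pushforward (\<Gamma> k \<times>\<times> \<Gamma> m) (block_emb k m) (\<lambda>(a, b). Phi G H l k X a * Phi G H l m Y b) c
       = l (entry_sum G (k + m) c)
         * pushforward (\<Gamma>' k \<times>\<times> \<Gamma>' m) (block_emb k m) (\<lambda>(a, b). X a * Y b) (red (k + m) c)"
proof (cases "c \<in> block_emb k m ` (carrier (\<Gamma> k) \<times> carrier (\<Gamma> m))")
  case True
  then obtain y\<^sub>1 y\<^sub>2 where y: "y\<^sub>1 \<in> carrier (\<Gamma> k)" "y\<^sub>2 \<in> carrier (\<Gamma> m)"
    and c_eq: "c = block_emb k m (y\<^sub>1, y\<^sub>2)"
    by blast
  have "pushforward (\<Gamma> k \<times>\<times> \<Gamma> m) (block_emb k m) (\<lambda>(a, b). Phi G H l k X a * Phi G H l m Y b) c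
      = Phi G H l k X y\<^sub>1 * Phi G H l m Y y\<^sub>2"
    unfolding pushforward_def carrier_DirProd
    by (subst sum_if_inj_eq[where y\<^sub>0 = "(y\<^sub>1, y\<^sub>2)"])
       (simp_all add: finite_carrier_\<Gamma> mono.inj_on_block_emb y c_eq)
  moreover have "pushforward (\<Gamma>' k \<times>\<times> \<Gamma>' m) (block_emb k m) (\<lambda>(a, b). X a * Y b) (red (k + m) c)
      = X (red k y\<^sub>1) * Y (red m y\<^sub>2)"
    unfolding pushforward_def carrier_DirProd
    by (subst sum_if_inj_eq[where y\<^sub>0 = "(red k y\<^sub>1, red m y\<^sub>2)"])
       (simp_all add: finite_carrier_\<Gamma>' mono_quot.inj_on_block_emb reduce_closed y c_eq reduce_block_emb)
  moreover have "l (entry_sum G (k + m) c) = l (entry_sum G k y\<^sub>1) * l (entry_sum G m y\<^sub>2)"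
    using y l by (simp add: c_eq mono.entry_sum_block_emb_closed dual_char_mult mono.entry_sum_in_K)
  ultimately show ?thesis
    using y by (simp add: Phi_def)
next
  case False
  then have "red (k + m) c \<notin> block_emb k m ` (carrier (\<Gamma>' k) \<times> carrier (\<Gamma>' m))"
    using block_emb_image_iff_reduce[OF c] by simp
  then have "\<forall>y\<in>carrier (\<Gamma>' k) \<times> carrier (\<Gamma>' m). block_emb k m y \<noteq> red (k + m) c"
    by (metis imageI)
  moreover have "\<forall>y\<in>carrier (\<Gamma> k) \<times> carrier (\<Gamma> m). block_emb k m y \<noteq> c"
    using False by blast
  ultimately show ?thesis
    unfolding pushforward_def carrier_DirProd by (simp add: sum.neutral)
qed

lemma Phi_prodR:
  assumes l: "dual_char G H l"
  shows "Phi G H l (k + m) (prodR (G Mod H) {H} k m X Y)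
       = prodR G H k m (Phi G H l k X) (Phi G H l m Y)"
proof
  fix g
  show "Phi G H l (k + m) (prodR (G Mod H) {H} k m X Y) g
      = prodR G H k m (Phi G H l k X) (Phi G H l m Y) g"
  proof (cases "g \<in> carrier (\<Gamma> (k + m))")
    case True
    interpret red: group_hom "\<Gamma> (k + m)" "\<Gamma>' (k + m)" "red (k + m)"
      by (rule group_hom_reduce)
    define PF where "PF = pushforward (\<Gamma> k \<times>\<times> \<Gamma> m) (block_emb k m)
        (\<lambda>(a, b). Phi G H l k X a * Phi G H l m Y b)"
    define PF' where "PF' = pushforward (\<Gamma>' k \<times>\<times> \<Gamma>' m) (block_emb k m) (\<lambda>(a, b). X a * Y b)"
    define conj where "conj x = x \<otimes>\<^bsub>\<Gamma> (k + m)\<^esub> g \<otimes>\<^bsub>\<Gamma> (k + m)\<^esub> inv\<^bsub>\<Gamma> (k + m)\<^esub> x" for x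
    define conj' where "conj' x' = x' \<otimes>\<^bsub>\<Gamma>' (k + m)\<^esub> red (k + m) g \<otimes>\<^bsub>\<Gamma>' (k + m)\<^esub>
        inv\<^bsub>\<Gamma>' (k + m)\<^esub> x'" for x'
    have "(\<Sum>x\<in>carrier (\<Gamma> (k + m)). PF (conj x))
        = (\<Sum>x\<in>carrier (\<Gamma> (k + m)). l (entry_sum G (k + m) g) * PF' (conj' (red (k + m) x)))"
      using True by (intro sum.cong)
        (simp_all add: PF_def PF'_def conj_def conj'_def pushforward_block_emb_Phi[OF l]
          mono.entry_sum_conj)
    also have "\<dots> = l (entry_sum G (k + m) g)
        * (of_nat (card H ^ (k + m)) * (\<Sum>x'\<in>carrier (\<Gamma>' (k + m)). PF' (conj' x')))"
      unfolding sum_distrib_left[symmetric] using sum_reduce[of "\<lambda>x'. PF' (conj' x')" "k + m"]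
      by simp
    finally have sum_eq: "(\<Sum>x\<in>carrier (\<Gamma> (k + m)). PF (conj x)) = \<dots>" .
    have card_eq: "card (carrier (\<Gamma> k) \<times> carrier (\<Gamma> m))
        = card H ^ (k + m) * card (carrier (\<Gamma>' k) \<times> carrier (\<Gamma>' m))"
      by (simp add: card_cartesian_product card_carrier_\<Gamma> power_add)
    have "Phi G H l (k + m) (prodR (G Mod H) {H} k m X Y) g = l (entry_sum G (k + m) g)
        * ((\<Sum>x'\<in>carrier (\<Gamma>' (k + m)). PF' (conj' x')) / of_nat (card (carrier (\<Gamma>' k \<times>\<times> \<Gamma>' m))))"
      using True reduce_closed[OF True]
      by (simp add: Phi_def prodR_def ind_pushforward PF'_def conj'_def)
    moreover have "prodR G H k m (Phi G H l k X) (Phi G H l m Y) g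
        = (\<Sum>x\<in>carrier (\<Gamma> (k + m)). PF (conj x)) / of_nat (card (carrier (\<Gamma> k \<times>\<times> \<Gamma> m)))"
      using True by (simp add: prodR_def ind_pushforward PF_def conj_def)
    ultimately show ?thesis
      using card_H_pos
      by (simp add: sum_eq card_eq mult.left_commute[of "l (entry_sum G (k + m) g)"])
  qed (simp add: Phi_def prodR_def ind_def)
qed

lemma coprodR_Phi:
  assumes l: "dual_char G H l"
  shows "coprodR G H k m (Phi G H l (k + m) X) = Phi_tensor G H l k m (coprodR (G Mod H) {H} k m X)"
proof
  fix z :: "((nat \<Rightarrow> nat) \<times> (nat \<Rightarrow> 'a)) \<times> ((nat \<Rightarrow> nat) \<times> (nat \<Rightarrow> 'a))"
  obtain y\<^sub>1 y\<^sub>2 where z: "z = (y\<^sub>1, y\<^sub>2)"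
    by (cases z)
  show "coprodR G H k m (Phi G H l (k + m) X) z = Phi_tensor G H l k m (coprodR (G Mod H) {H} k m X) z"
  proof (cases "y\<^sub>1 \<in> carrier (\<Gamma> k) \<and> y\<^sub>2 \<in> carrier (\<Gamma> m)")
    case True
    then have "l (entry_sum G (k + m) (block_emb k m (y\<^sub>1, y\<^sub>2)))
        = l (entry_sum G k y\<^sub>1) * l (entry_sum G m y\<^sub>2)"
      using l by (simp add: mono.entry_sum_block_emb_closed dual_char_mult mono.entry_sum_in_K)
    with True show ?thesis
      by (simp add: z coprodR_def res_def Phi_tensor_def Phi_def reduce_block_emb reduce_closed
          mono.block_emb_closed)
  qed (auto simp: z coprodR_def res_def Phi_tensor_def)
qed

lemma Phi_unitR:
  assumes "dual_char G H l"
  shows "Phi G H l 0 (unitR (G Mod H) {H}) = unitR G H"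
proof -
  have "l \<one> = 1"
    by (rule dual_char_one[OF is_monoid subgroup.one_closed[OF H_subgroup] assms])
  then show ?thesis
    by (auto simp: fun_eq_iff Phi_def unitR_def entry_sum_def reduce_closed)
qed

lemma Phi_counit:
  assumes "dual_char G H l"
  shows "Phi G H l 0 x \<one>\<^bsub>\<Gamma> 0\<^esub> = x \<one>\<^bsub>\<Gamma>' 0\<^esub>"
proof -
  interpret red: group_hom "\<Gamma> 0" "\<Gamma>' 0" "red 0"
    by (rule group_hom_reduce)
  have "l \<one> = 1"
    by (rule dual_char_one[OF is_monoid subgroup.one_closed[OF H_subgroup] assms])
  then show ?thesis
    using red.G.one_closed by (simp add: Phi_def mono.entry_sum_one mono.mono_grp_one flip: red.hom_one)
qed

end

theorem proposition1:
  fixes G :: "'a monoid" and H :: "'a set" and l :: "'a \<Rightarrow> complex"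
  assumes "comm_group G" and "finite (carrier G)" and "subgroup H G"
    and "dual_char G H l"
  shows
    "(\<forall>n. \<forall>x\<in>Rn (G Mod H) {H} n. Phi G H l n x \<in> Rn G H n)
   \<and> (\<forall>n. inj_on (Phi G H l n) (Rn (G Mod H) {H} n))
   \<and> (\<forall>n. \<forall>x\<in>Rn (G Mod H) {H} n. \<forall>y\<in>Rn (G Mod H) {H} n.
          Phi G H l n (\<lambda>g. x g + y g) = (\<lambda>g. Phi G H l n x g + Phi G H l n y g))
   \<and> (\<forall>k m. \<forall>x\<in>Rn (G Mod H) {H} k. \<forall>y\<in>Rn (G Mod H) {H} m.
          Phi G H l (k + m) (prodR (G Mod H) {H} k m x y)
            = prodR G H k m (Phi G H l k x) (Phi G H l m y))
   \<and> Phi G H l 0 (unitR (G Mod H) {H}) = unitR G H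
   \<and> (\<forall>x\<in>Rn (G Mod H) {H} 0.
          Phi G H l 0 x \<one>\<^bsub>mono_grp G H 0\<^esub> = x \<one>\<^bsub>mono_grp (G Mod H) {H} 0\<^esub>)
   \<and> (\<forall>k m. \<forall>x\<in>Rn (G Mod H) {H} (k + m).
          coprodR G H k m (Phi G H l (k + m) x)
            = Phi_tensor G H l k m (coprodR (G Mod H) {H} k m x))
   \<and> (\<forall>n \<chi>. irr_char (mono_grp (G Mod H) {H} n) \<chi>
          \<longrightarrow> irr_char (mono_grp G H n) (Phi G H l n \<chi>))"
proof -
  interpret reduction G H
    using assms(1-3) by (intro reduction.intro reduction_axioms.intro)
  have Phi_add: "Phi G H l n (\<lambda>g. x g + y g) = (\<lambda>g. Phi G H l n x g + Phi G H l n y g)" for n x y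
    by (simp add: Phi_def fun_eq_iff algebra_simps)
  show ?thesis
    using Phi_Rn[OF assms(4)] inj_on_Phi[OF assms(4)] Phi_add Phi_prodR[OF assms(4)]
      Phi_unitR[OF assms(4)] Phi_counit[OF assms(4)] coprodR_Phi[OF assms(4)] irr_char_Phi[OF assms(4)]
    by blast
qed

end
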